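(* Let $m\geq 2$ be an integer. There exists $\bar\varepsilon_m>0$ such that, if the micro RKC method uses a damping parameter $\varepsilon_m\in[0,\bar\varepsilon_m]$, the following holds. Let $\lambda\leq 0$, $\zeta<0$, $\alpha_m=P_m''(0)$, and let $s$, $\tau>0$, $\eta>0$ satisfy $$(1+\alpha_m)\,\tau|\zeta|\leq \tilde\beta_s s^2=\ell_s,\qquad \eta|\lambda|\leq \ell_m^{\varepsilon_m},\qquad \eta\geq\frac{2\tau(1+\alpha_m)}{\alpha_m\ell_s}.$$ Then the mROCK2 method applied with macro-step $\tau$ and micro-step $\eta$ to the scalar test equation $\dot y=\lambda y+\zeta y$ (with $f_F(y)=\lambda y$, $f_S(y)=\zeta y$) satisfies $y_{n+1}=R_{s,m}(\lambda,\zeta,\tau,\eta)\,y_n$ with $|R_{s,m}(\lambda,\zeta,\tau,\eta)|\leq 1$, i.e. the scheme is stable.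
   Context: RKC method (micro method). For damping $\varepsilon\geq 0$ and $m$ stages, let $T_j$ be the Chebyshev polynomials ($T_0=1$, $T_1(x)=x$, $T_j=2xT_{j-1}-T_{j-2}$), $\omega_0=1+\varepsilon/m^2$, $\omega_1=T_m(\omega_0)/T_m'(\omega_0)$, $b_j=1/T_j(\omega_0)$. One step of size $h$ for $\dot u=g(u)$ from $u_0$: $k_0=u_0$, $k_1=k_0+\frac{\omega_1}{\omega_0}h\,g(k_0)$, $k_j=\nu_jk_{j-1}+\kappa_jk_{j-2}+\mu_jh\,g(k_{j-1})$ for $j=2,\dots,m$, with $\mu_j=2\omega_1b_j/b_{j-1}$, $\nu_j=2\omega_0b_j/b_{j-1}$, $\kappa_j=-b_j/b_{j-2}$; the result is $k_m$. Its stability polynomial is $P_m(z)=b_mT_m(\omega_0+\omega_1z)$, which satisfies $|P_m(z)|\leq 1$ on $[-\ell_m^{\varepsilon},0]$ with $\ell_m^\varepsilon=2\omega_0/\omega_1$. Set $\Phi_m(z)=(P_m(z)-1)/z$, $\Phi_m(0)=1$. ROCK2 method (macro method): an explicit $s$-stage Runge–Kutta method whose application to $\dot y=\kappa y$ with step $\tau$ gives $y_{n+1}=R_s(\tau\kappa)y_n$ for a real polynomial $R_s$ with $|R_s(z)|\leq 1$ for all $z\in[-\ell_s,0]$, where $\ell_s=\tilde\beta_s s^2$ ($\tilde\beta_s>0$ is the ROCK2 stability constant). mROCK2 step for $\dot y=f_F(y)+f_S(y)$: define the numerical averaged force $\bar f_{\eta,2}(y)$ by (i) $u_\eta$ = one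 RKC step of size $\eta$ for $\dot u=f_F(u)+f_S(y)$, $u(0)=y$; (ii) $\bar f_{\eta,1}(y)=(u_\eta-y)/\eta$; (iii) $v_\eta$ = one RKC step of size $\eta$ for $\dot v=f_F\bigl(v-\frac{\alpha_m\eta}{2}\bar f_{\eta,1}(y)\bigr)+f_S(y)$, $v(0)=y$; (iv) $\bar f_{\eta,2}(y)=(v_\eta-y)/\eta$. Then $y_{n+1}$ is one ROCK2 step of size $\tau$ from $y_n$ for $\dot y=\bar f_{\eta,2}(y)$. $R_{s,m}(\lambda,\zeta,\tau,\eta)$ denotes the resulting amplification factor on the test equation. *)

theory Defs
  imports "HOL-Analysis.Analysis" "HOL-Computational_Algebra.Polynomial"
begin

fun cheb_T :: "nat \<Rightarrow> real \<Rightarrow> real" where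
  "cheb_T 0 x = 1"
| "cheb_T (Suc 0) x = x"
| "cheb_T (Suc (Suc j)) x = 2 * x * cheb_T (Suc j) x - cheb_T j x"

definition rkc_omega0 :: "nat \<Rightarrow> real \<Rightarrow> real" where
  "rkc_omega0 m eps = 1 + eps / (real m)^2"

definition rkc_omega1 :: "nat \<Rightarrow> real \<Rightarrow> real" where
  "rkc_omega1 m eps = cheb_T m (rkc_omega0 m eps) / deriv (cheb_T m) (rkc_omega0 m eps)"

definition rkc_b :: "nat \<Rightarrow> real \<Rightarrow> nat \<Rightarrow> real" where
  "rkc_b m eps j = 1 / cheb_T j (rkc_omega0 m eps)"

definition rkc_mu :: "nat \<Rightarrow> real \<Rightarrow> nat \<Rightarrow> real" where
  "rkc_mu m eps j = 2 * rkc_omega1 m eps * rkc_b m eps j / rkc_b m eps (j - 1)"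

definition rkc_nu :: "nat \<Rightarrow> real \<Rightarrow> nat \<Rightarrow> real" where
  "rkc_nu m eps j = 2 * rkc_omega0 m eps * rkc_b m eps j / rkc_b m eps (j - 1)"

definition rkc_kappa :: "nat \<Rightarrow> real \<Rightarrow> nat \<Rightarrow> real" where
  "rkc_kappa m eps j = - rkc_b m eps j / rkc_b m eps (j - 2)"

fun rkc_stage :: "nat \<Rightarrow> real \<Rightarrow> real \<Rightarrow> (real \<Rightarrow> real) \<Rightarrow> real \<Rightarrow> nat \<Rightarrow> real" where
  "rkc_stage m eps h g u0 0 = u0"
| "rkc_stage m eps h g u0 (Suc 0) =
     u0 + rkc_omega1 m eps / rkc_omega0 m eps * h * g u0"
| "rkc_stage m eps h g u0 (Suc (Suc j)) =
     rkc_nu m eps (j + 2) * rkc_stage m eps h g u0 (Suc j)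
     + rkc_kappa m eps (j + 2) * rkc_stage m eps h g u0 j
     + rkc_mu m eps (j + 2) * h * g (rkc_stage m eps h g u0 (Suc j))"

definition rkc_step :: "nat \<Rightarrow> real \<Rightarrow> real \<Rightarrow> (real \<Rightarrow> real) \<Rightarrow> real \<Rightarrow> real" where
  "rkc_step m eps h g u0 = rkc_stage m eps h g u0 m"

definition rkc_P :: "nat \<Rightarrow> real \<Rightarrow> real \<Rightarrow> real" where
  "rkc_P m eps z = rkc_b m eps m * cheb_T m (rkc_omega0 m eps + rkc_omega1 m eps * z)"

definition rkc_ell :: "nat \<Rightarrow> real \<Rightarrow> real" where
  "rkc_ell m eps = 2 * rkc_omega0 m eps / rkc_omega1 m eps"

definition rkc_alpha :: "nat \<Rightarrow> real \<Rightarrow> real" where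
  "rkc_alpha m eps = deriv (deriv (rkc_P m eps)) 0"

definition fbar1 :: "nat \<Rightarrow> real \<Rightarrow> real \<Rightarrow> (real \<Rightarrow> real) \<Rightarrow> (real \<Rightarrow> real) \<Rightarrow> real \<Rightarrow> real" where
  "fbar1 m eps eta fF fS y = (rkc_step m eps eta (\<lambda>u. fF u + fS y) y - y) / eta"

definition fbar2 :: "nat \<Rightarrow> real \<Rightarrow> real \<Rightarrow> (real \<Rightarrow> real) \<Rightarrow> (real \<Rightarrow> real) \<Rightarrow> real \<Rightarrow> real" where
  "fbar2 m eps eta fF fS y =
     (rkc_step m eps eta
        (\<lambda>v. fF (v - rkc_alpha m eps * eta / 2 * fbar1 m eps eta fF fS y) + fS y) y - y) / eta"

end

theory Submission
  imports Defs
begin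

text \<open>
  On the scalar test equation every RKC stage is affine in the data: a step of size \<open>h\<close> for
  \<open>u' = \<lambda> u + c\<close> returns \<open>P\<^sub>m(h\<lambda>) u\<^sub>0 + h \<Phi>\<^sub>m(h\<lambda>) c\<close>, because the RKC recursion is the three-term
  recursion of the Chebyshev polynomials in the \<open>u\<^sub>0\<close>-part and of their divided differences in the
  \<open>c\<close>-part. Hence \<open>fbar2 y = (\<lambda> + \<zeta>) G y\<close> with \<open>G = \<Phi>(-w) (1 + \<alpha> w \<Phi>(-w) / 2)\<close> and \<open>w = \<eta> |\<lambda>|\<close>,
  and the ROCK2 step is stable once \<open>\<tau> (|\<lambda>| + |\<zeta>|) G \<le> \<ell>\<^sub>s\<close>. The two step size restrictions reduce this
  to \<open>(1 + \<alpha> w / 2) \<Phi>(-w) (1 + \<alpha> w \<Phi>(-w) / 2) \<le> 1 + \<alpha>\<close> on \<open>[0, \<ell>\<^sub>m]\<close>.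

  For damping \<open>\<epsilon> \<le> 1/100\<close> (uniformly in \<open>m\<close>) this follows from the Chebyshev differential equation
  at \<open>\<omega>\<^sub>0 = 1 + \<epsilon>/m\<^sup>2\<close>: all derivatives of \<open>T\<^sub>m\<close> are nonnegative on \<open>[1, \<infinity>)\<close>, \<open>6/25 \<le> \<alpha> \<le> 7/20\<close>,
  and beyond the cubic term the Taylor expansion of \<open>P\<^sub>m(-w)\<close> alternates with decreasing terms,
  so that \<open>1 - P\<^sub>m(-w) \<le> w - \<alpha> w\<^sup>2/2 + 3 \<alpha>\<^sup>2 w\<^sup>3/20\<close>. This settles \<open>w (1 - \<alpha>) < 2\<close>; for larger \<open>w\<close>
  the bound \<open>|P\<^sub>m| \<le> 1\<close> suffices.
\<close>

section \<open>Chebyshev polynomials\<close>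

fun cheb_poly :: "nat \<Rightarrow> real poly" where
  "cheb_poly 0 = 1"
| "cheb_poly (Suc 0) = [:0, 1:]"
| "cheb_poly (Suc (Suc n)) = smult 2 ([:0, 1:] * cheb_poly (Suc n)) - cheb_poly n"

lemma poly_cheb_poly [simp]: "poly (cheb_poly n) x = cheb_T n x"
  by (induction n rule: cheb_poly.induct) (simp_all add: algebra_simps)

lemma degree_cheb_poly_le: "degree (cheb_poly n) \<le> n"
proof (induction n rule: cheb_poly.induct)
  case (3 n)
  have "degree (smult 2 ([:0, 1:] * cheb_poly (Suc n))) \<le> Suc (Suc n)"
    using degree_mult_le[of "[:0, 1:]" "cheb_poly (Suc n)"] 3(1) by simp
  moreover have "degree (cheb_poly n) \<le> Suc (Suc n)" using 3(2) by simp
  ultimately show ?case by (simp add: degree_diff_le)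
qed simp_all

lemma coeff_cheb_poly_top: "coeff (cheb_poly n) n \<ge> 1"
proof (induction n rule: cheb_poly.induct)
  case (3 n)
  have "coeff (cheb_poly n) (Suc (Suc n)) = 0"
    using degree_cheb_poly_le[of n] by (simp add: coeff_eq_0)
  then show ?case using 3(1) by simp
qed simp_all

lemma degree_cheb_poly [simp]: "degree (cheb_poly n) = n"
  using degree_cheb_poly_le[of n] coeff_cheb_poly_top[of n] le_degree[of "cheb_poly n" n]
  by fastforce

lemma cheb_pderiv_identity_pointwise:
  "(1 - x\<^sup>2) * poly (pderiv (cheb_poly n)) x = real n * (x * cheb_T n x - cheb_T (Suc n) x)"
proof (induction n rule: cheb_poly.induct)
  case (3 n)
  have "(1 - x\<^sup>2) * poly (pderiv (cheb_poly (Suc (Suc n)))) x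
      = 2 * (1 - x\<^sup>2) * cheb_T (Suc n) x + 2 * x * ((1 - x\<^sup>2) * poly (pderiv (cheb_poly (Suc n))) x)
        - (1 - x\<^sup>2) * poly (pderiv (cheb_poly n)) x"
    by (simp add: pderiv_diff pderiv_smult pderiv_mult pderiv_pCons algebra_simps)
  also have "\<dots> = real (Suc (Suc n)) * (x * cheb_T (Suc (Suc n)) x - cheb_T (Suc (Suc (Suc n))) x)"
    unfolding 3 by (simp add: algebra_simps power2_eq_square)
  finally show ?case .
qed (simp_all add: pderiv_pCons power2_eq_square algebra_simps)

lemma cheb_pderiv_identity:
  "[:1, 0, -1:] * pderiv (cheb_poly n) = smult (real n) ([:0, 1:] * cheb_poly n - cheb_poly (Suc n))"
proof -
  have "poly ([:1, 0, -1:] * pderiv (cheb_poly n)) x = (1 - x\<^sup>2) * poly (pderiv (cheb_poly n)) x" for x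
    by (simp add: algebra_simps power2_eq_square)
  then show ?thesis
    by (intro poly_eq_poly_eq_iff[THEN iffD1] ext) (simp add: cheb_pderiv_identity_pointwise)
qed

lemma cheb_poly_ode:
  "[:1, 0, -1:] * pderiv (pderiv (cheb_poly n)) - [:0, 1:] * pderiv (cheb_poly n)
     + smult (real n ^ 2) (cheb_poly n) = 0"
  (is "?Q = 0")
proof -
  have "poly ([:1, 0, -1:] * ?Q) x = 0" for x
  proof -
    define T T1 D D1 DD where "T = cheb_T n x" and "T1 = cheb_T (Suc n) x"
      and "D = poly (pderiv (cheb_poly n)) x" and "D1 = poly (pderiv (cheb_poly (Suc n))) x"
      and "DD = poly (pderiv (pderiv (cheb_poly n))) x"
    have e1: "(1 - x\<^sup>2) * D = real n * (x * T - T1)"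
      using cheb_pderiv_identity_pointwise[of x n] by (simp add: D_def T_def T1_def)
    have e2: "(1 - x\<^sup>2) * D1 = real (Suc n) * (x * T1 - (2 * x * T1 - T))"
      using cheb_pderiv_identity_pointwise[of x "Suc n"] by (simp add: D1_def T_def T1_def)
    have "poly (pderiv ([:1, 0, -1:] * pderiv (cheb_poly n))) x
        = poly (pderiv (smult (real n) ([:0, 1:] * cheb_poly n - cheb_poly (Suc n)))) x"
      by (simp only: cheb_pderiv_identity)
    then have e3: "(1 - x\<^sup>2) * DD - 2 * x * D = real n * (T + x * D - D1)"
      by (simp add: pderiv_mult pderiv_pCons pderiv_smult pderiv_diff pderiv_add pderiv_minus
          DD_def D_def D1_def T_def
          algebra_simps power2_eq_square)
    have "poly ([:1, 0, -1:] * ?Q) x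
        = (1 - x\<^sup>2) * ((1 - x\<^sup>2) * DD - 2 * x * D) + x * ((1 - x\<^sup>2) * D) + real n ^ 2 * (1 - x\<^sup>2) * T"
      by (simp add: DD_def D_def T_def algebra_simps power2_eq_square)
    also have "\<dots> = real n * (1 - x\<^sup>2) * T + (real n + 1) * x * ((1 - x\<^sup>2) * D)
        - real n * ((1 - x\<^sup>2) * D1) + real n ^ 2 * (1 - x\<^sup>2) * T"
      unfolding e3 by (simp add: algebra_simps)
    also have "\<dots> = 0"
      unfolding e1 e2 by (simp add: algebra_simps power2_eq_square)
    finally show ?thesis .
  qed
  then have "[:1, 0, -1:] * ?Q = 0"
    by (intro poly_eq_poly_eq_iff[THEN iffD1]) auto
  then show ?thesis by (metis mult_eq_0_iff pCons_eq_0_iff one_neq_zero)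
qed

lemma cheb_poly_ode_higher:
  "[:1, 0, -1:] * (pderiv ^^ (k + 2)) (cheb_poly n)
     - smult (real (2 * k + 1)) ([:0, 1:] * (pderiv ^^ (k + 1)) (cheb_poly n))
     + smult (real n ^ 2 - real k ^ 2) ((pderiv ^^ k) (cheb_poly n)) = 0"
proof (induction k)
  case 0
  then show ?case using cheb_poly_ode[of n] by (simp add: numeral_2_eq_2)
next
  case (Suc k)
  let ?D = "\<lambda>j. (pderiv ^^ j) (cheb_poly n)"
  have "poly (pderiv ([:1, 0, -1:] * ?D (k + 2) - smult (real (2 * k + 1)) ([:0, 1:] * ?D (k + 1))
          + smult (real n ^ 2 - real k ^ 2) (?D k))) x
      = poly ([:1, 0, -1:] * ?D (Suc k + 2) - smult (real (2 * Suc k + 1)) ([:0, 1:] * ?D (Suc k + 1))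
          + smult (real n ^ 2 - real (Suc k) ^ 2) (?D (Suc k))) x" for x
    by (simp add: pderiv_mult pderiv_pCons pderiv_smult pderiv_diff pderiv_add pderiv_minus
        algebra_simps power2_eq_square)
  then have "pderiv ([:1, 0, -1:] * ?D (k + 2) - smult (real (2 * k + 1)) ([:0, 1:] * ?D (k + 1))
          + smult (real n ^ 2 - real k ^ 2) (?D k))
      = [:1, 0, -1:] * ?D (Suc k + 2) - smult (real (2 * Suc k + 1)) ([:0, 1:] * ?D (Suc k + 1))
          + smult (real n ^ 2 - real (Suc k) ^ 2) (?D (Suc k))"
    by (intro poly_eq_poly_eq_iff[THEN iffD1] ext)
  then show ?case
    using Suc by simp
qed

definition cheb_deriv :: "nat \<Rightarrow> nat \<Rightarrow> real \<Rightarrow> real" where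
  "cheb_deriv n k x = poly ((pderiv ^^ k) (cheb_poly n)) x"

lemma cheb_deriv_0 [simp]: "cheb_deriv n 0 x = cheb_T n x"
  by (simp add: cheb_deriv_def)

lemma cheb_deriv_1: "cheb_deriv n 1 x = deriv (cheb_T n) x"
proof -
  have "cheb_T n = poly (cheb_poly n)"
    by auto
  then show ?thesis
    by (simp add: cheb_deriv_def DERIV_imp_deriv[OF poly_DERIV] del: poly_cheb_poly)
qed

lemma cheb_deriv_ode:
  "(1 - x\<^sup>2) * cheb_deriv n (k + 2) x - real (2 * k + 1) * x * cheb_deriv n (k + 1) x
     + (real n ^ 2 - real k ^ 2) * cheb_deriv n k x = 0"
proof -
  have "poly ([:1, 0, -1:] * (pderiv ^^ (k + 2)) (cheb_poly n)
     - smult (real (2 * k + 1)) ([:0, 1:] * (pderiv ^^ (k + 1)) (cheb_poly n))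
     + smult (real n ^ 2 - real k ^ 2) ((pderiv ^^ k) (cheb_poly n))) x = 0"
    by (simp only: cheb_poly_ode_higher poly_0)
  then show ?thesis by (simp add: cheb_deriv_def algebra_simps power2_eq_square)
qed

lemma cheb_deriv_eq_0: "n < k \<Longrightarrow> cheb_deriv n k x = 0"
proof -
  assume "n < k"
  then have "(pderiv ^^ k) (cheb_poly n) = 0"
    by (intro poly_eqI) (simp add: coeff_higher_pderiv coeff_eq_0)
  then show ?thesis by (simp add: cheb_deriv_def)
qed

lemma cheb_deriv_top_pos: "0 < cheb_deriv n n x"
proof -
  have "(pderiv ^^ n) (cheb_poly n) = [:fact n * coeff (cheb_poly n) n:]"
    by (intro poly_eqI)
       (auto simp: coeff_higher_pderiv pochhammer_fact coeff_pCons coeff_eq_0 split: nat.split)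
  then show ?thesis
    using coeff_cheb_poly_top[of n] by (simp add: cheb_deriv_def)
qed

text \<open>Downward induction on \<open>k\<close>: for \<open>x \<ge> 1\<close> the differentiated Chebyshev equation writes
  \<open>(n\<^sup>2 - k\<^sup>2) T\<^sub>n^(k)\<close> as a nonnegative combination of \<open>T\<^sub>n^(k+1)\<close> and \<open>T\<^sub>n^(k+2)\<close>.\<close>
lemma cheb_deriv_pos:
  assumes "k \<le> n" and x: "1 \<le> x"
  shows "0 < cheb_deriv n k x"
proof -
  have "0 < cheb_deriv n k x \<and> 0 \<le> cheb_deriv n (Suc k) x"
    using \<open>k \<le> n\<close>
  proof (induction k rule: inc_induct)
    case base
    then show ?case using cheb_deriv_top_pos cheb_deriv_eq_0[of n "Suc n"] by simp
  next
    case (step k)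
    have "0 \<le> x\<^sup>2 - 1"
      using x by simp
    then have "0 < (x\<^sup>2 - 1) * cheb_deriv n (k + 2) x + real (2 * k + 1) * x * cheb_deriv n (k + 1) x"
      using step.IH x by (intro add_nonneg_pos) (simp_all add: numeral_2_eq_2)
    also have "\<dots> = (real n ^ 2 - real k ^ 2) * cheb_deriv n k x"
      using cheb_deriv_ode[of x n k] by (simp add: algebra_simps)
    finally have "0 < (real n ^ 2 - real k ^ 2) * cheb_deriv n k x" .
    moreover have "real k ^ 2 < real n ^ 2"
      using step.hyps by (simp add: power_strict_mono)
    ultimately show ?case
      using step.IH by (simp add: zero_less_mult_iff)
  qed
  then show ?thesis ..
qed

lemma cheb_deriv_nonneg: "1 \<le> x \<Longrightarrow> 0 \<le> cheb_deriv n k x"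
  by (cases "k \<le> n") (simp_all add: cheb_deriv_pos less_imp_le cheb_deriv_eq_0)

text \<open>\<open>cheb_divdiff j y a\<close> is the divided difference \<open>(T\<^sub>j y - T\<^sub>j a) / (y - a)\<close>, continued by \<open>T\<^sub>j' a\<close>
  on the diagonal.\<close>
fun cheb_divdiff :: "nat \<Rightarrow> real \<Rightarrow> real \<Rightarrow> real" where
  "cheb_divdiff 0 y a = 0"
| "cheb_divdiff (Suc 0) y a = 1"
| "cheb_divdiff (Suc (Suc j)) y a
     = 2 * y * cheb_divdiff (Suc j) y a - cheb_divdiff j y a + 2 * cheb_T (Suc j) a"

lemma cheb_divdiff: "(y - a) * cheb_divdiff j y a = cheb_T j y - cheb_T j a"
proof (induction j rule: cheb_poly.induct)
  case (3 j)
  have "(y - a) * cheb_divdiff (Suc (Suc j)) y a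
      = 2 * y * ((y - a) * cheb_divdiff (Suc j) y a) - (y - a) * cheb_divdiff j y a
        + 2 * (y - a) * cheb_T (Suc j) a"
    by (simp add: algebra_simps)
  then show ?case
    unfolding 3 by (simp add: algebra_simps)
qed simp_all

lemma cheb_divdiff_diag: "cheb_divdiff j a a = cheb_deriv j 1 a"
proof (induction j rule: cheb_poly.induct)
  case (3 j)
  then show ?case
    by (simp add: cheb_deriv_def pderiv_diff pderiv_smult pderiv_mult pderiv_pCons algebra_simps)
qed (simp_all add: cheb_deriv_def pderiv_pCons)

lemma poly_taylor:
  fixes p :: "'a::field_char_0 poly"
  assumes "degree p \<le> N"
  shows "poly p (a + y) = (\<Sum>k\<le>N. poly ((pderiv ^^ k) p) a / fact k * y ^ k)"
proof -
  define q where "q = pcompose p [:a, 1:]"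
  have "coeff q k = poly ((pderiv ^^ k) p) a / fact k" for k
  proof -
    have "(pderiv ^^ k) q = pcompose ((pderiv ^^ k) p) [:a, 1:]"
      unfolding q_def by (induction k) (simp_all add: pderiv_pcompose pderiv_pCons)
    then have "fact k * coeff q k = poly ((pderiv ^^ k) p) a"
      using coeff_higher_pderiv[of k q 0] by (simp add: pochhammer_fact poly_0_coeff_0 poly_pcompose)
    then show ?thesis by (simp add: field_simps)
  qed
  moreover have "degree q \<le> N"
    using assms by (simp add: q_def degree_pcompose)
  ultimately have "poly q y = (\<Sum>k\<le>N. poly ((pderiv ^^ k) p) a / fact k * y ^ k)"
    by (subst poly_as_sum_of_monoms'[symmetric]) (simp_all add: poly_sum poly_monom)
  then show ?thesis by (simp add: q_def poly_pcompose)
qed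

lemma cheb_T_taylor:
  "n \<le> N \<Longrightarrow> cheb_T n (a + y) = (\<Sum>k\<le>N. cheb_deriv n k a / fact k * y ^ k)"
  using poly_taylor[of "cheb_poly n" N a y] by (simp add: cheb_deriv_def)

lemma cheb_T_cos: "cheb_T n (cos t) = cos (real n * t)"
proof (induction n rule: cheb_poly.induct)
  case (3 j)
  have "cos (real (Suc (Suc j)) * t) = cos (real (Suc j) * t + t)"
    and "cos (real j * t) = cos (real (Suc j) * t - t)"
    by (simp_all add: algebra_simps)
  then show ?case
    using 3 by (simp add: cos_add cos_diff)
qed simp_all

lemma cheb_T_one [simp]: "cheb_T n 1 = 1"
  using cheb_T_cos[of n 0] by simp

lemma cheb_T_minus: "cheb_T n (- x) = (-1) ^ n * cheb_T n x"
  by (induction n rule: cheb_poly.induct) (simp_all add: algebra_simps)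

text \<open>All Taylor coefficients of \<open>T\<^sub>n\<close> at \<open>1\<close> are nonnegative.\<close>
lemma cheb_T_ge_1_mono:
  assumes "1 \<le> x" "x \<le> y"
  shows "1 \<le> cheb_T n x" and "cheb_T n x \<le> cheb_T n y"
proof -
  have taylor: "cheb_T n z = (\<Sum>k\<le>n. cheb_deriv n k 1 / fact k * (z - 1) ^ k)" for z
    using cheb_T_taylor[of n n 1 "z - 1"] by simp
  have coeff_nonneg: "0 \<le> cheb_deriv n k 1 / fact k" for k
    by (simp add: cheb_deriv_nonneg)
  show "cheb_T n x \<le> cheb_T n y"
    unfolding taylor using assms coeff_nonneg
    by (intro sum_mono mult_left_mono power_mono) auto
  have "cheb_T n x = 1 + (\<Sum>k<n. cheb_deriv n (Suc k) 1 / fact (Suc k) * (x - 1) ^ Suc k)"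
    unfolding taylor sum.atMost_shift by simp
  moreover have "0 \<le> (\<Sum>k<n. cheb_deriv n (Suc k) 1 / fact (Suc k) * (x - 1) ^ Suc k)"
    using assms coeff_nonneg by (intro sum_nonneg mult_nonneg_nonneg) (auto simp del: fact_Suc)
  ultimately show "1 \<le> cheb_T n x" by linarith
qed

lemma cheb_T_ge_1: "1 \<le> x \<Longrightarrow> 1 \<le> cheb_T n x"
  using cheb_T_ge_1_mono(1)[of x x] by simp

lemma cheb_T_abs_le:
  assumes "1 \<le> x0" "\<bar>x\<bar> \<le> x0"
  shows "\<bar>cheb_T n x\<bar> \<le> cheb_T n x0"
proof (cases "\<bar>x\<bar> \<le> 1")
  case True
  then have "\<bar>cheb_T n x\<bar> \<le> 1"
    by (metis abs_cos_le_one cheb_T_cos cos_arccos_abs)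
  also have "1 \<le> cheb_T n x0"
    using cheb_T_ge_1 assms by simp
  finally show ?thesis .
next
  case False
  have "\<bar>cheb_T n x\<bar> = cheb_T n \<bar>x\<bar>"
    using cheb_T_minus[of n "\<bar>x\<bar>"] cheb_T_ge_1[of "\<bar>x\<bar>" n] False
    by (cases "x \<ge> 0") (simp_all add: abs_mult)
  also have "\<dots> \<le> cheb_T n x0"
    using cheb_T_ge_1_mono(2)[of "\<bar>x\<bar>" x0 n] False assms by simp
  finally show ?thesis .
qed

lemma alternating_sum_bounds:
  fixes d :: "nat \<Rightarrow> real"
  assumes "\<And>k. d (Suc k) \<le> d k" and "\<And>k. 0 \<le> d k"
  shows "0 \<le> (\<Sum>i<N. (-1) ^ i * d i) \<and> (\<Sum>i<N. (-1) ^ i * d i) \<le> d 0"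
  using assms
proof (induction N arbitrary: d)
  case (Suc N)
  have "(\<Sum>i<Suc N. (-1) ^ i * d i) = d 0 - (\<Sum>i<N. (-1) ^ i * d (Suc i))"
    unfolding sum.lessThan_Suc_shift by (simp add: sum_negf)
  moreover have "0 \<le> (\<Sum>i<N. (-1) ^ i * d (Suc i)) \<and> (\<Sum>i<N. (-1) ^ i * d (Suc i)) \<le> d 1"
    using Suc.IH[of "\<lambda>i. d (Suc i)"] Suc.prems by simp
  ultimately show ?case
    using Suc.prems[of 0] by simp
qed simp

lemma cheb_deriv_Suc_le:
  assumes x: "1 \<le> x"
  shows "real (2 * k + 1) * cheb_deriv n (k + 1) x \<le> real n ^ 2 * cheb_deriv n k x"
proof -
  have "real (2 * k + 1) * cheb_deriv n (k + 1) x \<le> real (2 * k + 1) * x * cheb_deriv n (k + 1) x"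
    using x cheb_deriv_nonneg[OF x, of n "k + 1"] by (simp add: mult_right_mono)
  moreover have "0 \<le> (x\<^sup>2 - 1) * cheb_deriv n (k + 2) x" and "0 \<le> real k ^ 2 * cheb_deriv n k x"
    using x by (simp_all add: cheb_deriv_nonneg)
  ultimately show ?thesis
    using cheb_deriv_ode[of x n k] by (simp add: algebra_simps)
qed

lemma cheb_taylor_term_decreasing:
  assumes x: "1 \<le> x" and h: "0 \<le> h" "real n ^ 2 * h \<le> 45" and k: "4 \<le> k"
  shows "cheb_deriv n (Suc k) x / fact (Suc k) * h ^ Suc k \<le> cheb_deriv n k x / fact k * h ^ k"
proof -
  have "real (2 * k + 1) * (cheb_deriv n (Suc k) x * h) \<le> real n ^ 2 * h * cheb_deriv n k x"
    using mult_right_mono[OF cheb_deriv_Suc_le[OF x, of k n] h(1)] by (simp add: ac_simps)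
  also have "\<dots> \<le> 45 * cheb_deriv n k x"
    using h cheb_deriv_nonneg[OF x, of n k] by (intro mult_right_mono) simp_all
  also have "\<dots> \<le> real (2 * k + 1) * (real (Suc k) * cheb_deriv n k x)"
  proof -
    have "(9::real) * 5 \<le> real (2 * k + 1) * real (Suc k)"
      using k by (intro mult_mono) auto
    then show ?thesis
      using cheb_deriv_nonneg[OF x, of n k] by (simp add: mult_right_mono flip: mult.assoc)
  qed
  finally have "cheb_deriv n (Suc k) x * h \<le> real (Suc k) * cheb_deriv n k x"
    by simp
  then have "cheb_deriv n (Suc k) x * h * (h ^ k / fact (Suc k))
      \<le> real (Suc k) * cheb_deriv n k x * (h ^ k / fact (Suc k))"
    by (rule mult_right_mono) (simp add: h(1))
  then show ?thesis
    by (simp add: ac_simps del: of_nat_Suc)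
qed

text \<open>Beyond the cubic term the Taylor expansion of \<open>T\<^sub>n(x - h)\<close> at \<open>x\<close> alternates with decreasing
  terms, so its tail is nonnegative.\<close>
lemma cheb_T_cubic_lower_bound:
  assumes x: "1 \<le> x" and h: "0 \<le> h" "real n ^ 2 * h \<le> 45"
  shows "cheb_T n x - cheb_deriv n 1 x * h + cheb_deriv n 2 x / 2 * h\<^sup>2 - cheb_deriv n 3 x / 6 * h ^ 3
           \<le> cheb_T n (x - h)"
proof -
  define d where "d k = cheb_deriv n k x / fact k * h ^ k" for k
  have "cheb_T n (x + - h) = (\<Sum>k\<le>Suc (Suc (Suc n)). cheb_deriv n k x / fact k * (- h) ^ k)"
    by (rule cheb_T_taylor) simp
  also have "\<dots> = (\<Sum>k\<le>Suc (Suc (Suc n)). (-1) ^ k * d k)"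
    by (intro sum.cong refl) (simp add: d_def power_minus[of h])
  also have "\<dots> = d 0 - d 1 + d 2 - d 3 + (\<Sum>i<n. (-1) ^ i * d (i + 4))"
    by (simp only: sum.atMost_shift sum.lessThan_Suc_shift) (simp add: eval_nat_numeral)
  finally have "cheb_T n (x - h) = d 0 - d 1 + d 2 - d 3 + (\<Sum>i<n. (-1) ^ i * d (i + 4))"
    by simp
  moreover have "0 \<le> (\<Sum>i<n. (-1) ^ i * d (i + 4))"
  proof -
    have "d (Suc k + 4) \<le> d (k + 4)" for k
      using cheb_taylor_term_decreasing[OF x h, of "k + 4"] by (simp add: d_def)
    moreover have "0 \<le> d k" for k
      using x h by (simp add: d_def cheb_deriv_nonneg)
    ultimately show ?thesis
      using alternating_sum_bounds[of "\<lambda>i. d (i + 4)"] by blast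
  qed
  ultimately show ?thesis
    by (simp add: d_def fact_numeral)
qed

section \<open>Chebyshev polynomials slightly to the right of 1\<close>

text \<open>\<open>x\<close> plays the role of \<open>\<omega>\<^sub>0 = 1 + \<epsilon>/m\<^sup>2\<close>, for which \<open>m\<^sup>2 (\<omega>\<^sub>0\<^sup>2 - 1) \<le> 3/100\<close> when \<open>\<epsilon> \<le> 1/100\<close>.\<close>
context
  fixes n :: nat and x :: real
  assumes n: "2 \<le> n" and x: "1 \<le> x" and damping: "real n ^ 2 * (x\<^sup>2 - 1) \<le> 3/100"
begin

private lemma four_le_n_sq: "4 \<le> real n ^ 2"
  using power_mono[of 2 "real n" 2] n by simp

private lemma sq_minus_1_nonneg: "0 \<le> x\<^sup>2 - 1"
  using x by simp

private lemma x_le: "x \<le> 101/100"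
proof (rule ccontr)
  assume "\<not> x \<le> 101/100"
  then have "(101/100)\<^sup>2 \<le> x\<^sup>2"
    by (intro power_mono) simp_all
  moreover have "4 * (x\<^sup>2 - 1) \<le> real n ^ 2 * (x\<^sup>2 - 1)"
    using four_le_n_sq sq_minus_1_nonneg by (rule mult_right_mono)
  ultimately show False
    using damping by (simp add: power2_eq_square)
qed

private lemma ode_shifted:
  "real (2 * k + 1) * x * cheb_deriv n (k + 1) x
     = (real n ^ 2 - real k ^ 2) * cheb_deriv n k x - (x\<^sup>2 - 1) * cheb_deriv n (k + 2) x"
  using cheb_deriv_ode[of x n k] by (simp add: algebra_simps)

private lemma damping_term_le:
  "(x\<^sup>2 - 1) * cheb_deriv n (k + 1) x \<le> 3/100 / real (2 * k + 1) * cheb_deriv n k x"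
proof -
  have "real (2 * k + 1) * ((x\<^sup>2 - 1) * cheb_deriv n (k + 1) x)
      \<le> (x\<^sup>2 - 1) * (real n ^ 2 * cheb_deriv n k x)"
    using mult_left_mono[OF cheb_deriv_Suc_le[OF x, of k n] sq_minus_1_nonneg] by (simp add: ac_simps)
  also have "\<dots> \<le> 3/100 * cheb_deriv n k x"
    using mult_right_mono[OF damping cheb_deriv_nonneg[OF x, of n k]] by (simp add: ac_simps)
  finally show ?thesis
    by (simp add: field_simps)
qed

lemma cheb_damped_ratio_le: "real n ^ 2 * cheb_T n x \<le> 51/50 * cheb_deriv n 1 x"
proof -
  have "real n ^ 2 * cheb_T n x = x * cheb_deriv n 1 x + (x\<^sup>2 - 1) * cheb_deriv n 2 x"
    using ode_shifted[of 0] by (simp add: numeral_2_eq_2)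
  also have "\<dots> \<le> 101/100 * cheb_deriv n 1 x + 1/100 * cheb_deriv n 1 x"
    using x_le damping_term_le[of 1] cheb_deriv_nonneg[OF x, of n 1]
    by (intro add_mono mult_right_mono) (simp_all add: numeral_2_eq_2)
  finally show ?thesis by simp
qed

lemma cheb_damped_first_le_second: "real n ^ 2 * cheb_deriv n 1 x \<le> 81/20 * cheb_deriv n 2 x"
proof -
  have "(real n ^ 2 - 1) * cheb_deriv n 1 x = 3 * x * cheb_deriv n 2 x + (x\<^sup>2 - 1) * cheb_deriv n 3 x"
    using ode_shifted[of 1] by (simp add: numeral_eq_Suc)
  also have "\<dots> \<le> 3 * (101/100) * cheb_deriv n 2 x + 3/500 * cheb_deriv n 2 x"
    using x_le damping_term_le[of 2] cheb_deriv_nonneg[OF x, of n 2]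
    by (intro add_mono mult_right_mono) (simp_all add: numeral_eq_Suc)
  finally have "(real n ^ 2 - 1) * cheb_deriv n 1 x \<le> 759/250 * cheb_deriv n 2 x"
    by simp
  moreover have "real n ^ 2 * cheb_deriv n 1 x \<le> 4/3 * ((real n ^ 2 - 1) * cheb_deriv n 1 x)"
    using mult_right_mono[OF four_le_n_sq cheb_deriv_nonneg[OF x, of n 1]] by (simp add: algebra_simps)
  ultimately show ?thesis
    using cheb_deriv_nonneg[OF x, of n 2] by linarith
qed

lemma cheb_damped_second_bounds:
  "6/25 * (cheb_deriv n 1 x)\<^sup>2 \<le> cheb_T n x * cheb_deriv n 2 x"
  "cheb_T n x * cheb_deriv n 2 x \<le> 7/20 * (cheb_deriv n 1 x)\<^sup>2"
proof -
  have t0: "0 \<le> cheb_T n x" and t1: "0 \<le> cheb_deriv n 1 x" and t2: "0 \<le> cheb_deriv n 2 x"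
    using cheb_T_ge_1[OF x, of n] by (simp_all add: cheb_deriv_nonneg[OF x])
  have "cheb_deriv n 1 x \<le> x * cheb_deriv n 1 x"
    using x t1 by (simp add: mult_right_mono[of 1 x, simplified])
  also have "\<dots> \<le> real n ^ 2 * cheb_T n x"
    using ode_shifted[of 0] mult_nonneg_nonneg[OF sq_minus_1_nonneg t2] by (simp add: numeral_2_eq_2)
  finally have "cheb_deriv n 1 x * cheb_deriv n 1 x \<le> cheb_deriv n 1 x * (real n ^ 2 * cheb_T n x)"
    using t1 by (rule mult_left_mono)
  also have "\<dots> = (real n ^ 2 * cheb_deriv n 1 x) * cheb_T n x"
    by (simp add: ac_simps)
  also have "\<dots> \<le> (81/20 * cheb_deriv n 2 x) * cheb_T n x"
    using cheb_damped_first_le_second t0 by (rule mult_right_mono)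
  finally show "6/25 * (cheb_deriv n 1 x)\<^sup>2 \<le> cheb_T n x * cheb_deriv n 2 x"
    using mult_nonneg_nonneg[OF t0 t2] by (simp add: power2_eq_square ac_simps)
  have "3 * cheb_deriv n 2 x \<le> real n ^ 2 * cheb_deriv n 1 x"
    using cheb_deriv_Suc_le[OF x, of 1 n] by (simp add: numeral_2_eq_2)
  then have "cheb_T n x * (3 * cheb_deriv n 2 x) \<le> cheb_T n x * (real n ^ 2 * cheb_deriv n 1 x)"
    using t0 by (rule mult_left_mono)
  also have "\<dots> = (real n ^ 2 * cheb_T n x) * cheb_deriv n 1 x"
    by (simp add: ac_simps)
  also have "\<dots> \<le> 51/50 * cheb_deriv n 1 x * cheb_deriv n 1 x"
    using cheb_damped_ratio_le t1 by (intro mult_right_mono) simp_all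
  finally have "cheb_T n x * cheb_deriv n 2 x \<le> 17/50 * (cheb_deriv n 1 x)\<^sup>2"
    by (simp add: power2_eq_square)
  also have "\<dots> \<le> 7/20 * (cheb_deriv n 1 x)\<^sup>2"
    by (intro mult_right_mono) simp_all
  finally show "cheb_T n x * cheb_deriv n 2 x \<le> 7/20 * (cheb_deriv n 1 x)\<^sup>2" .
qed

lemma cheb_damped_third_le: "cheb_deriv n 1 x * cheb_deriv n 3 x \<le> 9/10 * (cheb_deriv n 2 x)\<^sup>2"
proof -
  have t1: "0 \<le> cheb_deriv n 1 x"
    by (simp add: cheb_deriv_nonneg[OF x])
  have "5 * cheb_deriv n 3 x \<le> real n ^ 2 * cheb_deriv n 2 x"
    using cheb_deriv_Suc_le[OF x, of 2 n] by (simp add: numeral_eq_Suc)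
  then have "cheb_deriv n 1 x * (5 * cheb_deriv n 3 x)
      \<le> cheb_deriv n 1 x * (real n ^ 2 * cheb_deriv n 2 x)"
    using t1 by (rule mult_left_mono)
  also have "\<dots> = (real n ^ 2 * cheb_deriv n 1 x) * cheb_deriv n 2 x"
    by (simp add: ac_simps)
  also have "\<dots> \<le> 81/20 * cheb_deriv n 2 x * cheb_deriv n 2 x"
    using cheb_damped_first_le_second cheb_deriv_nonneg[OF x, of n 2] by (intro mult_right_mono) simp_all
  finally have "cheb_deriv n 1 x * cheb_deriv n 3 x \<le> 81/100 * (cheb_deriv n 2 x)\<^sup>2"
    by (simp add: power2_eq_square)
  also have "\<dots> \<le> 9/10 * (cheb_deriv n 2 x)\<^sup>2"
    by (intro mult_right_mono) simp_all
  finally show ?thesis .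
qed

end

section \<open>RKC steps for affine right-hand sides\<close>

lemma rkc_omega0_ge_1: "0 \<le> eps \<Longrightarrow> 1 \<le> rkc_omega0 m eps"
  by (simp add: rkc_omega0_def)

lemma rkc_omega1_eq:
  "rkc_omega1 m eps = cheb_T m (rkc_omega0 m eps) / cheb_deriv m 1 (rkc_omega0 m eps)"
  unfolding rkc_omega1_def cheb_deriv_1 ..

lemma rkc_omega1_nonneg: "0 \<le> eps \<Longrightarrow> 0 \<le> rkc_omega1 m eps"
  using cheb_deriv_nonneg[of _ m 1] cheb_T_ge_1[of _ m]
  by (simp add: rkc_omega1_eq rkc_omega0_ge_1 order.trans[OF zero_le_one])

lemma rkc_omega1_pos: "1 \<le> m \<Longrightarrow> 0 \<le> eps \<Longrightarrow> 0 < rkc_omega1 m eps"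
  using cheb_deriv_pos[of 1 m] cheb_T_ge_1[of _ m]
  by (simp add: rkc_omega1_eq rkc_omega0_ge_1 order.strict_trans2[OF zero_less_one])

lemma rkc_P_eq:
  "rkc_P m eps z = cheb_T m (rkc_omega0 m eps + rkc_omega1 m eps * z) / cheb_T m (rkc_omega0 m eps)"
  by (simp add: rkc_P_def rkc_b_def)

lemma rkc_P_0: "0 \<le> eps \<Longrightarrow> rkc_P m eps 0 = 1"
  using cheb_T_ge_1[OF rkc_omega0_ge_1, of eps m m] by (simp add: rkc_P_eq)

lemma rkc_P_abs_le_1:
  assumes eps: "0 \<le> eps" and z: "- rkc_ell m eps \<le> z" "z \<le> 0"
  shows "\<bar>rkc_P m eps z\<bar> \<le> 1"
proof -
  define x0 w where "x0 = rkc_omega0 m eps" and "w = rkc_omega1 m eps"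
  have x0: "1 \<le> x0" and w: "0 \<le> w"
    using eps by (simp_all add: x0_def w_def rkc_omega0_ge_1 rkc_omega1_nonneg)
  have "- (2 * x0) \<le> w * z"
  proof (cases "w = 0")
    case False
    then have "- (2 * x0) = w * (- rkc_ell m eps)"
      by (simp add: rkc_ell_def x0_def w_def)
    also have "\<dots> \<le> w * z"
      using z w by (intro mult_left_mono) simp_all
    finally show ?thesis .
  qed (use x0 in simp)
  moreover have "w * z \<le> 0"
    using w z by (simp add: mult_nonneg_nonpos)
  ultimately have "\<bar>cheb_T m (x0 + w * z)\<bar> \<le> cheb_T m x0"
    using x0 by (intro cheb_T_abs_le) auto
  then show ?thesis
    using cheb_T_ge_1[OF x0, of m] by (simp add: rkc_P_eq x0_def w_def abs_div)
qed

lemma rkc_alpha_eq: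
  "rkc_alpha m eps
     = rkc_omega1 m eps ^ 2 * cheb_deriv m 2 (rkc_omega0 m eps) / cheb_T m (rkc_omega0 m eps)"
proof -
  have deriv_poly: "deriv (poly p) = poly (pderiv p)" for p :: "real poly"
    by (rule ext) (rule DERIV_imp_deriv, rule poly_DERIV)
  have "rkc_P m eps
      = poly (smult (rkc_b m eps m) (pcompose (cheb_poly m) [:rkc_omega0 m eps, rkc_omega1 m eps:]))"
    by (rule ext) (simp add: rkc_P_def poly_pcompose algebra_simps)
  then show ?thesis
    by (simp add: rkc_alpha_def deriv_poly pderiv_smult pderiv_pcompose pderiv_mult pderiv_pCons
        poly_pcompose cheb_deriv_def rkc_b_def numeral_2_eq_2 power2_eq_square)
qed

lemma rkc_alpha_eq_cheb_deriv:
  assumes "0 \<le> eps"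
  shows "rkc_alpha m eps = cheb_T m (rkc_omega0 m eps) * cheb_deriv m 2 (rkc_omega0 m eps)
                             / (cheb_deriv m 1 (rkc_omega0 m eps))\<^sup>2"
  using cheb_T_ge_1[OF rkc_omega0_ge_1[OF assms], of m]
  by (simp add: rkc_alpha_eq rkc_omega1_eq power2_eq_square field_simps)

definition rkc_Phi :: "nat \<Rightarrow> real \<Rightarrow> real \<Rightarrow> real" where
  "rkc_Phi m eps z = (if z = 0 then 1 else (rkc_P m eps z - 1) / z)"

lemma rkc_P_eq_Phi: "0 \<le> eps \<Longrightarrow> rkc_P m eps z = 1 + z * rkc_Phi m eps z"
  by (simp add: rkc_Phi_def rkc_P_0)

lemma rkc_Phi_nonneg:
  assumes "0 \<le> eps" "0 \<le> w" "w \<le> rkc_ell m eps"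
  shows "0 \<le> rkc_Phi m eps (- w)"
proof (cases "w = 0")
  case False
  have "\<bar>rkc_P m eps (- w)\<bar> \<le> 1"
    using assms by (intro rkc_P_abs_le_1) simp_all
  then show ?thesis
    using False assms(2) by (simp add: rkc_Phi_def abs_le_iff divide_nonpos_pos)
qed (simp add: rkc_Phi_def)

lemma rkc_stage_affine:
  assumes "0 \<le> eps"
  shows "cheb_T j (rkc_omega0 m eps) * rkc_stage m eps h (\<lambda>u. lam * u + c) u0 j
       = cheb_T j (rkc_omega0 m eps + rkc_omega1 m eps * h * lam) * u0
         + rkc_omega1 m eps * h * c
           * cheb_divdiff j (rkc_omega0 m eps + rkc_omega1 m eps * h * lam) (rkc_omega0 m eps)"
proof (induction j rule: cheb_poly.induct)
  case 2
  have "rkc_omega0 m eps \<noteq> 0"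
    using rkc_omega0_ge_1[OF assms, of m] by simp
  then show ?case by (simp add: field_simps)
next
  case (3 j)
  define x w s t y where "x = rkc_omega0 m eps" and "w = rkc_omega1 m eps"
    and "s = rkc_stage m eps h (\<lambda>u. lam * u + c) u0" and "t i = cheb_T i x" and "y = x + w * h * lam"
    for i
  have t_pos: "0 < t i" for i
    using cheb_T_ge_1[OF rkc_omega0_ge_1[OF assms]]
    by (simp add: t_def x_def order.strict_trans2[OF zero_less_one])
  have IH: "t (Suc j) * s (Suc j) = cheb_T (Suc j) y * u0 + w * h * c * cheb_divdiff (Suc j) y x"
    "t j * s j = cheb_T j y * u0 + w * h * c * cheb_divdiff j y x"
    using 3 by (simp_all add: s_def t_def x_def w_def y_def)
  have recursion: "s (Suc (Suc j)) = (2 * x * t (Suc j) / t (Suc (Suc j))) * s (Suc j)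
       - (t j / t (Suc (Suc j))) * s j
       + (2 * w * t (Suc j) / t (Suc (Suc j))) * h * (lam * s (Suc j) + c)"
    by (simp add: s_def t_def x_def w_def rkc_nu_def rkc_kappa_def rkc_mu_def rkc_b_def numeral_2_eq_2)
  have "t (Suc (Suc j)) * s (Suc (Suc j))
      = 2 * y * (t (Suc j) * s (Suc j)) - t j * s j + 2 * w * h * c * t (Suc j)"
    unfolding recursion using t_pos[of "Suc (Suc j)"] by (simp add: y_def field_simps)
  also have "\<dots> = cheb_T (Suc (Suc j)) y * u0 + w * h * c * cheb_divdiff (Suc (Suc j)) y x"
    unfolding IH by (simp add: t_def algebra_simps)
  finally show ?case
    by (simp add: s_def t_def x_def w_def y_def)
qed simp

lemma rkc_step_affine:
  assumes "1 \<le> m" "0 \<le> eps"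
  shows "rkc_step m eps h (\<lambda>u. lam * u + c) u0
       = rkc_P m eps (h * lam) * u0 + h * rkc_Phi m eps (h * lam) * c"
proof -
  define x w y where "x = rkc_omega0 m eps" and "w = rkc_omega1 m eps" and "y = x + w * h * lam"
  have x: "1 \<le> x"
    using rkc_omega0_ge_1[OF assms(2)] by (simp add: x_def)
  have t: "1 \<le> cheb_T m x"
    using cheb_T_ge_1[OF x] by simp
  have w: "0 < w"
    using rkc_omega1_pos[OF assms] by (simp add: w_def)
  have "w * cheb_divdiff m y x / cheb_T m x = rkc_Phi m eps (h * lam)"
  proof (cases "h * lam = 0")
    case True
    then have "y = x"
      by (simp add: y_def mult.assoc)
    moreover have "0 < cheb_deriv m 1 x"
      using cheb_deriv_pos[OF assms(1) x] .
    ultimately show ?thesis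
      using True t by (simp add: cheb_divdiff_diag rkc_Phi_def w_def rkc_omega1_eq flip: x_def)
  next
    case False
    have "w * cheb_divdiff m y x = (cheb_T m y - cheb_T m x) / (h * lam)"
      using cheb_divdiff[of y x m] w False by (simp add: y_def field_simps)
    then show ?thesis
      using False t by (simp add: rkc_Phi_def rkc_P_eq x_def w_def y_def field_simps)
  qed
  moreover have "rkc_stage m eps h (\<lambda>u. lam * u + c) u0 m
      = cheb_T m y / cheb_T m x * u0 + h * (w * cheb_divdiff m y x / cheb_T m x) * c"
    using rkc_stage_affine[OF assms(2), of m m h lam c u0] t
    by (simp add: x_def w_def y_def field_simps)
  ultimately show ?thesis
    by (simp add: rkc_step_def rkc_P_eq x_def w_def y_def mult.assoc)
qed

lemma fbar2_linear:
  assumes "1 \<le> m" "0 \<le> eps" "eta \<noteq> 0"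
  shows "fbar2 m eps eta (\<lambda>u. lam * u) (\<lambda>u. zeta * u) y
       = y * ((lam + zeta) * rkc_Phi m eps (eta * lam)
              * (1 - rkc_alpha m eps * eta * lam * rkc_Phi m eps (eta * lam) / 2))"
proof -
  define F al where "F = rkc_Phi m eps (eta * lam)" and "al = rkc_alpha m eps"
  have P: "rkc_P m eps (eta * lam) = 1 + eta * lam * F"
    using rkc_P_eq_Phi[OF assms(2)] by (simp add: F_def)
  have fbar1: "fbar1 m eps eta (\<lambda>u. lam * u) (\<lambda>u. zeta * u) y = F * (lam + zeta) * y"
    using assms(3)
    by (simp add: fbar1_def rkc_step_affine[OF assms(1,2)] P flip: F_def) (simp add: field_simps)
  define c where "c = zeta * y - lam * (al * eta / 2 * (F * (lam + zeta) * y))"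
  have "(\<lambda>v. lam * (v - al * eta / 2 * fbar1 m eps eta (\<lambda>u. lam * u) (\<lambda>u. zeta * u) y) + zeta * y)
      = (\<lambda>v. lam * v + c)"
    unfolding fbar1 c_def by (simp add: algebra_simps)
  then have "fbar2 m eps eta (\<lambda>u. lam * u) (\<lambda>u. zeta * u) y
      = (rkc_P m eps (eta * lam) * y + eta * F * c - y) / eta"
    by (simp add: fbar2_def rkc_step_affine[OF assms(1,2)] flip: al_def F_def)
  also have "\<dots> = y * ((lam + zeta) * F * (1 - al * eta * lam * F / 2))"
    unfolding P c_def using assms(3) by (simp add: field_simps)
  finally show ?thesis
    by (simp add: F_def al_def)
qed

section \<open>Stability of mROCK2 on the test equation\<close>

lemma correction_factor_product_le:
  fixes u :: real
  assumes u: "0 \<le> u" "u \<le> 27/50"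
  shows "(1 + u)\<^sup>2 * (1 - u + 3/5 * u\<^sup>2) * (1 + u * (1 - u + 3/5 * u\<^sup>2)) \<le> 1 + 2 * u"
proof -
  define g where "g = 2/5 + 3/5 * u - 9/5 * u ^ 2 - 4/25 * u ^ 3 + 12/25 * u ^ 4 - 9/25 * u ^ 5"
  have identity: "1 + 2 * u - (1 + u)\<^sup>2 * (1 - u + 3/5 * u\<^sup>2) * (1 + u * (1 - u + 3/5 * u\<^sup>2)) = u\<^sup>2 * g"
    by (simp add: g_def eval_nat_numeral field_simps)
  have pow: "u ^ Suc k \<le> (27/50) ^ k * u" for k
    using mult_right_mono[OF power_mono[OF u(2,1)] u(1), of k] by (simp add: mult.commute)
  have "u ^ 2 \<le> 27/50 * u"
    using pow[of 1] by (simp add: numeral_2_eq_2)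
  moreover have "u ^ 3 \<le> 729/2500 * u"
    using pow[of 2] by (simp add: power2_eq_square)
  moreover have "u ^ 5 \<le> 531441/6250000 * u"
    using pow[of 4] by (simp add: power_divide)
  ultimately have "0 \<le> g"
    using zero_le_power[OF u(1), of 4] u unfolding g_def by linarith
  then have "0 \<le> u\<^sup>2 * g"
    by simp
  with identity show ?thesis
    by linarith
qed

lemma averaged_factor_le_cubic:
  fixes al w p :: real
  assumes al: "6/25 \<le> al" "al \<le> 7/20" and w: "0 < w" "w * (1 - al) < 2"
    and p: "0 \<le> p" "p \<le> w - al/2 * w\<^sup>2 + 3/20 * al\<^sup>2 * w ^ 3"
  shows "(1 + al * w / 2) * p * (1 + al * p / 2) \<le> (1 + al) * w"
proof -
  define u r where "u = al * w / 2" and "r = 1 - u + 3/5 * u\<^sup>2"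
  have u0: "0 \<le> u"
    using al w by (simp add: u_def)
  have u_al: "u * (1 - al) < al"
    using w al by (simp add: u_def)
  have u1: "u \<le> 27/50"
  proof (rule ccontr)
    assume "\<not> u \<le> 27/50"
    then have "27/50 * (1 - al) < u * (1 - al)"
      using al by (intro mult_strict_right_mono) simp_all
    then show False
      using u_al al by simp
  qed
  have r: "0 \<le> r"
    using u0 u1 mult_left_le_one_le[of u u] by (simp add: r_def power2_eq_square)
  have p_le: "p \<le> w * r"
    using p(2) by (simp add: r_def u_def algebra_simps power2_eq_square power3_eq_cube)
  have "(1 + al * w / 2) * p * (1 + al * p / 2) \<le> (1 + u) * (w * r) * (1 + u * r)"
    using p_le p(1) u0 r w al
    by (intro mult_mono) (simp_all add: u_def mult_left_mono divide_right_mono)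
  also have "\<dots> = w * ((1 + u) * r * (1 + u * r))"
    by (simp add: algebra_simps)
  also have "\<dots> \<le> w * (1 + al)"
  proof (intro mult_left_mono)
    have "(1 + u) * ((1 + u) * r * (1 + u * r)) \<le> 1 + 2 * u"
      using correction_factor_product_le[OF u0 u1] by (simp add: r_def power2_eq_square ac_simps)
    also have "\<dots> \<le> (1 + u) * (1 + al)"
      using u_al by (simp add: algebra_simps)
    finally show "(1 + u) * r * (1 + u * r) \<le> 1 + al"
      using u0 by (simp add: mult_le_cancel_left_pos)
  qed (use w in simp)
  finally show ?thesis
    by (simp add: mult.commute)
qed

text \<open>Here \<open>p\<close> stands for \<open>1 - P\<^sub>m(-w) = w \<Phi>\<^sub>m(-w)\<close>.\<close>
lemma averaged_factor_le:
  fixes al w p :: real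
  assumes al: "6/25 \<le> al" "al \<le> 7/20" and w: "0 < w" and p: "0 \<le> p" "p \<le> 2"
    and cubic: "w * (1 - al) < 2 \<Longrightarrow> p \<le> w - al/2 * w\<^sup>2 + 3/20 * al\<^sup>2 * w ^ 3"
  shows "(1 + al * w / 2) * p * (1 + al * p / 2) \<le> (1 + al) * w"
proof (cases "w * (1 - al) < 2")
  case True
  then show ?thesis
    using averaged_factor_le_cubic[OF al w True p(1) cubic] by blast
next
  case False
  have "(1 + al * w / 2) * p * (1 + al * p / 2) \<le> (1 + al * w / 2) * 2 * (1 + al * 2 / 2)"
    using p al w by (intro mult_mono) (simp_all add: mult_left_mono)
  also have "\<dots> = (2 + al * w) * (1 + al)"
    by (simp add: algebra_simps)
  also have "\<dots> \<le> w * (1 + al)"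
    using False al by (intro mult_right_mono) (simp_all add: algebra_simps)
  finally show ?thesis
    by (simp add: mult.commute)
qed

text \<open>\<open>F\<close> stands for \<open>\<Phi>\<^sub>m(-\<eta>|\<lambda>|)\<close>; the conclusion puts \<open>\<tau> \<cdot> fbar2 1\<close> into the ROCK2 stability interval.\<close>
lemma macro_argument_le:
  fixes al tau eta lam zeta L F :: real
  assumes al: "0 < al" and L: "0 < L" and F: "0 \<le> F" and eta0: "0 \<le> eta"
    and factor: "(1 + al * (eta * \<bar>lam\<bar>) / 2) * F * (1 + al * (eta * \<bar>lam\<bar>) * F / 2) \<le> 1 + al"
    and slow: "(1 + al) * tau * \<bar>zeta\<bar> \<le> L"
    and eta: "2 * tau * (1 + al) / (al * L) \<le> eta"
  shows "tau * (\<bar>lam\<bar> + \<bar>zeta\<bar>) * (F * (1 + al * (eta * \<bar>lam\<bar>) * F / 2)) \<le> L"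
proof -
  define G where "G = F * (1 + al * (eta * \<bar>lam\<bar>) * F / 2)"
  have G: "0 \<le> G"
    using al F eta0 by (simp add: G_def)
  have "2 * tau * (1 + al) \<le> eta * (al * L)"
    using eta al L by (simp add: divide_le_eq)
  then have "(1 + al) * tau * \<bar>lam\<bar> \<le> L * (al * (eta * \<bar>lam\<bar>) / 2)"
    using mult_right_mono[of "2 * tau * (1 + al)" "eta * (al * L)" "\<bar>lam\<bar>"] by (simp add: algebra_simps)
  with slow have "(1 + al) * (tau * (\<bar>lam\<bar> + \<bar>zeta\<bar>)) \<le> L * (1 + al * (eta * \<bar>lam\<bar>) / 2)"
    by (simp add: algebra_simps)
  then have "(1 + al) * (tau * (\<bar>lam\<bar> + \<bar>zeta\<bar>)) * G \<le> L * (1 + al * (eta * \<bar>lam\<bar>) / 2) * G"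
    using G by (rule mult_right_mono)
  then have "(1 + al) * (tau * (\<bar>lam\<bar> + \<bar>zeta\<bar>) * G) \<le> L * ((1 + al * (eta * \<bar>lam\<bar>) / 2) * G)"
    by (simp add: ac_simps)
  also have "\<dots> \<le> L * (1 + al)"
    using factor L by (simp add: G_def ac_simps)
  finally show ?thesis
    using al by (simp add: G_def mult.commute[of L])
qed

context
  fixes m :: nat and eps :: real
  assumes m: "2 \<le> m" and eps: "0 \<le> eps" "eps \<le> 1/100"
begin

lemma rkc_damping_small: "real m ^ 2 * ((rkc_omega0 m eps)\<^sup>2 - 1) \<le> 3/100"
proof -
  have M: "4 \<le> real m ^ 2"
    using power_mono[of 2 "real m" 2] m by simp
  have "real m ^ 2 * ((rkc_omega0 m eps)\<^sup>2 - 1) = eps * (2 + eps / real m ^ 2)"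
    using m by (simp add: rkc_omega0_def power2_eq_square field_simps)
  also have "\<dots> \<le> 1/100 * (2 + 1/4)"
    using eps M by (intro mult_mono add_left_mono) (simp_all add: divide_le_eq)
  finally show ?thesis by simp
qed

lemmas cheb_at_omega0 =
  cheb_damped_ratio_le[OF m rkc_omega0_ge_1[OF eps(1)] rkc_damping_small]
  cheb_damped_second_bounds[OF m rkc_omega0_ge_1[OF eps(1)] rkc_damping_small]
  cheb_damped_third_le[OF m rkc_omega0_ge_1[OF eps(1)] rkc_damping_small]

lemma rkc_omega1_damped_le: "real m ^ 2 * rkc_omega1 m eps \<le> 51/50"
  using cheb_at_omega0(1) cheb_deriv_pos[of 1 m "rkc_omega0 m eps"] m rkc_omega0_ge_1[OF eps(1)]
  by (simp add: rkc_omega1_eq pos_divide_le_eq)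

lemma rkc_alpha_damped_bounds: "6/25 \<le> rkc_alpha m eps" "rkc_alpha m eps \<le> 7/20"
  using cheb_at_omega0(2,3) cheb_deriv_pos[of 1 m "rkc_omega0 m eps"] m rkc_omega0_ge_1[OF eps(1)]
  by (simp_all add: rkc_alpha_eq_cheb_deriv[OF eps(1)] le_divide_eq divide_le_eq)

lemma rkc_third_coeff_damped_le:
  "rkc_omega1 m eps ^ 3 * cheb_deriv m 3 (rkc_omega0 m eps)
     \<le> 9/10 * (rkc_alpha m eps)\<^sup>2 * cheb_T m (rkc_omega0 m eps)"
proof -
  define x0 w1 where "x0 = rkc_omega0 m eps" and "w1 = rkc_omega1 m eps"
  define t where "t k = cheb_deriv m k x0" for k
  have x0: "1 \<le> x0"
    using rkc_omega0_ge_1[OF eps(1)] by (simp add: x0_def)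
  have t0: "0 < t 0" and t1: "0 < t 1"
    using cheb_T_ge_1[OF x0, of m] cheb_deriv_pos[of 1 m x0] m x0 by (simp_all add: t_def)
  have w1: "w1 = t 0 / t 1"
    by (simp add: w1_def x0_def t_def rkc_omega1_eq)
  have "w1 ^ 3 * t 3 = (t 1 * t 3) * (w1 ^ 4 / t 0)"
    using t0 t1 by (simp add: w1 field_simps eval_nat_numeral)
  also have "\<dots> \<le> (9/10 * (t 2)\<^sup>2) * (w1 ^ 4 / t 0)"
    using cheb_at_omega0(4) t0 by (intro mult_right_mono) (simp_all add: t_def x0_def)
  also have "\<dots> = 9/10 * (w1\<^sup>2 * t 2 / t 0)\<^sup>2 * t 0"
    using t0 by (simp add: field_simps power2_eq_square eval_nat_numeral)
  finally show ?thesis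
    by (simp add: t_def x0_def w1_def rkc_alpha_eq)
qed

lemma rkc_P_damped_cubic_lower:
  assumes w: "0 \<le> w" "w \<le> 40"
  shows "1 - w + rkc_alpha m eps / 2 * w\<^sup>2 - 3/20 * (rkc_alpha m eps)\<^sup>2 * w ^ 3 \<le> rkc_P m eps (- w)"
proof -
  define x0 w1 al h where "x0 = rkc_omega0 m eps" and "w1 = rkc_omega1 m eps"
    and "al = rkc_alpha m eps" and "h = w1 * w"
  define t where "t k = cheb_deriv m k x0" for k
  have x0: "1 \<le> x0"
    using rkc_omega0_ge_1[OF eps(1)] by (simp add: x0_def)
  have t0: "0 < t 0" and t1: "0 < t 1"
    using cheb_T_ge_1[OF x0, of m] cheb_deriv_pos[of 1 m x0] m x0 by (simp_all add: t_def)
  have w1: "w1 = t 0 / t 1" and al: "al = w1\<^sup>2 * t 2 / t 0"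
    by (simp_all add: w1_def al_def x0_def t_def rkc_omega1_eq rkc_alpha_eq)
  have h: "0 \<le> h"
    using w rkc_omega1_nonneg[OF eps(1)] by (simp add: h_def w1_def)
  have "real m ^ 2 * h \<le> 51/50 * 40"
    using rkc_omega1_damped_le w rkc_omega1_nonneg[OF eps(1), of m]
    unfolding h_def w1_def mult.assoc[symmetric] by (intro mult_mono) simp_all
  then have cubic: "t 0 - t 1 * h + t 2 / 2 * h\<^sup>2 - t 3 / 6 * h ^ 3 \<le> cheb_T m (x0 - h)"
    using cheb_T_cubic_lower_bound[OF x0 h] by (simp add: t_def)
  have first: "t 1 * h = t 0 * w"
    using t1 by (simp add: h_def w1)
  have second: "t 2 / 2 * h\<^sup>2 = t 0 * (al / 2 * w\<^sup>2)"
    using t0 by (simp add: h_def al power_mult_distrib)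
  have "t 3 * h ^ 3 = (w1 ^ 3 * t 3) * w ^ 3"
    by (simp add: h_def power_mult_distrib)
  also have "\<dots> \<le> (9/10 * al\<^sup>2 * t 0) * w ^ 3"
    using rkc_third_coeff_damped_le w
    by (intro mult_right_mono) (simp_all add: t_def x0_def w1_def al_def)
  finally have third: "t 3 / 6 * h ^ 3 \<le> t 0 * (3/20 * al\<^sup>2 * w ^ 3)"
    by (simp add: ac_simps)
  have "t 0 * (1 - w + al / 2 * w\<^sup>2 - 3/20 * al\<^sup>2 * w ^ 3)
      = t 0 - t 0 * w + t 0 * (al / 2 * w\<^sup>2) - t 0 * (3/20 * al\<^sup>2 * w ^ 3)"
    by (simp add: algebra_simps)
  also have "\<dots> \<le> cheb_T m (x0 - h)"
    using cubic first second third by linarith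
  finally have "t 0 * (1 - w + al / 2 * w\<^sup>2 - 3/20 * al\<^sup>2 * w ^ 3) \<le> cheb_T m (x0 - h)" .
  moreover have "rkc_P m eps (- w) = cheb_T m (x0 - h) / t 0"
    by (simp add: rkc_P_eq x0_def w1_def h_def t_def)
  ultimately show ?thesis
    using t0 by (simp add: pos_le_divide_eq al_def mult.commute)
qed

lemma rkc_Phi_damped_bound:
  assumes w: "0 \<le> w" "w \<le> rkc_ell m eps"
  shows "(1 + rkc_alpha m eps * w / 2) * rkc_Phi m eps (- w)
           * (1 + rkc_alpha m eps * w * rkc_Phi m eps (- w) / 2)
           \<le> 1 + rkc_alpha m eps"
proof (cases "w = 0")
  case False
  define al p where "al = rkc_alpha m eps" and "p = 1 - rkc_P m eps (- w)"
  have al: "6/25 \<le> al" "al \<le> 7/20"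
    using rkc_alpha_damped_bounds by (simp_all add: al_def)
  have w_pos: "0 < w"
    using False w(1) by simp
  have "\<bar>rkc_P m eps (- w)\<bar> \<le> 1"
    using w by (intro rkc_P_abs_le_1[OF eps(1)]) simp_all
  then have p: "0 \<le> p" "p \<le> 2"
    by (simp_all add: p_def abs_le_iff)
  have "p \<le> w - al/2 * w\<^sup>2 + 3/20 * al\<^sup>2 * w ^ 3" if "w * (1 - al) < 2"
  proof -
    have "w * (13/20) \<le> w * (1 - al)"
      using al w_pos by (intro mult_left_mono) simp_all
    then have "w \<le> 40"
      using that by simp
    then show ?thesis
      using rkc_P_damped_cubic_lower[OF w(1)] by (simp add: p_def al_def)
  qed
  then have "(1 + al * w / 2) * p * (1 + al * p / 2) \<le> (1 + al) * w"
    using averaged_factor_le[OF al w_pos p] by blast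
  then have "(1 + al * w / 2) * (p / w) * (1 + al * w * (p / w) / 2) \<le> 1 + al"
    using w_pos by (simp add: field_simps)
  moreover have "rkc_Phi m eps (- w) = p / w"
    using False by (simp add: rkc_Phi_def p_def field_simps)
  ultimately show ?thesis
    by (simp add: al_def)
qed (simp add: rkc_Phi_def rkc_alpha_damped_bounds order.trans[OF _ rkc_alpha_damped_bounds(1)])

lemma mrock2_amplification_le_1:
  fixes R :: "real \<Rightarrow> real"
  assumes lam: "lam \<le> 0" and zeta: "zeta \<le> 0" and tau: "0 < tau" and eta: "0 < eta" and L: "0 < L"
    and R: "\<And>z. - L \<le> z \<Longrightarrow> z \<le> 0 \<Longrightarrow> \<bar>R z\<bar> \<le> 1"
    and slow: "(1 + rkc_alpha m eps) * tau * \<bar>zeta\<bar> \<le> L"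
    and fast: "eta * \<bar>lam\<bar> \<le> rkc_ell m eps"
    and eta_ge: "2 * tau * (1 + rkc_alpha m eps) / (rkc_alpha m eps * L) \<le> eta"
  shows "\<bar>R (tau * fbar2 m eps eta (\<lambda>u. lam * u) (\<lambda>u. zeta * u) 1)\<bar> \<le> 1"
proof -
  define w F G where "w = eta * \<bar>lam\<bar>" and "F = rkc_Phi m eps (- w)"
    and "G = F * (1 + rkc_alpha m eps * w * F / 2)"
  have alpha: "0 < rkc_alpha m eps"
    using rkc_alpha_damped_bounds(1) by linarith
  have Phi: "0 \<le> F"
    "(1 + rkc_alpha m eps * w / 2) * F * (1 + rkc_alpha m eps * w * F / 2) \<le> 1 + rkc_alpha m eps"
    using rkc_Phi_nonneg[OF eps(1)] rkc_Phi_damped_bound eta fast by (simp_all add: w_def F_def)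
  have "eta * lam = - w"
    using lam by (simp add: w_def)
  then have "fbar2 m eps eta (\<lambda>u. lam * u) (\<lambda>u. zeta * u) 1 = (lam + zeta) * G"
    using fbar2_linear[of m eps eta lam zeta 1] m eps eta by (simp add: F_def G_def mult.assoc)
  then have "tau * fbar2 m eps eta (\<lambda>u. lam * u) (\<lambda>u. zeta * u) 1 = - (tau * (\<bar>lam\<bar> + \<bar>zeta\<bar>) * G)"
    using lam zeta by (simp add: algebra_simps)
  moreover have "tau * (\<bar>lam\<bar> + \<bar>zeta\<bar>) * G \<le> L"
    unfolding G_def w_def using macro_argument_le[OF alpha L Phi(1) _ _ slow eta_ge] Phi eta
    by (simp add: w_def)
  moreover have "0 \<le> G"
    using Phi alpha eta by (simp add: G_def w_def)
  ultimately show ?thesis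
    using R tau by simp
qed

end

theorem theorem4p3:
  fixes m :: nat
  assumes "m \<ge> 2"
  shows "\<exists>epsbar > 0. \<forall>eps. 0 \<le> eps \<and> eps \<le> epsbar \<longrightarrow>
    (\<forall>(lam::real) (zeta::real) (s::nat) (beta::real) (R::real poly) (tau::real) (eta::real).
       lam \<le> 0 \<longrightarrow> zeta < 0 \<longrightarrow> s \<ge> 1 \<longrightarrow> beta > 0 \<longrightarrow>
       (\<forall>z \<in> {- (beta * (real s)^2) .. 0}. \<bar>poly R z\<bar> \<le> 1) \<longrightarrow>
       tau > 0 \<longrightarrow> eta > 0 \<longrightarrow>
       (1 + rkc_alpha m eps) * tau * \<bar>zeta\<bar> \<le> beta * (real s)^2 \<longrightarrow>
       eta * \<bar>lam\<bar> \<le> rkc_ell m eps \<longrightarrow>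
       eta \<ge> 2 * tau * (1 + rkc_alpha m eps) / (rkc_alpha m eps * (beta * (real s)^2)) \<longrightarrow>
       (\<forall>y. fbar2 m eps eta (\<lambda>u. lam * u) (\<lambda>u. zeta * u) y
              = fbar2 m eps eta (\<lambda>u. lam * u) (\<lambda>u. zeta * u) 1 * y)
       \<and> \<bar>poly R (tau * fbar2 m eps eta (\<lambda>u. lam * u) (\<lambda>u. zeta * u) 1)\<bar> \<le> 1)"
  apply (intro exI[of _ "1/100"] conjI allI impI)
  subgoal by simp
  subgoal premises prems for eps lam zeta s beta R tau eta y
    using fbar2_linear[of m eps eta lam zeta] assms prems by simp
  subgoal premises prems for eps lam zeta s beta R tau eta
    by (rule mrock2_amplification_le_1[OF assms]) (use prems in auto)
  done

end
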